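(* Let $\lambda,\mu\in P^+$ (type $C_2$). Then $$|\mathcal T^{C}_{\lambda,\mu}|=|\mathcal T^{C}_{\lambda-\varpi_1,\mu-\varpi_1}|+|{}^{1}\mathcal T^{C}_{\lambda-\varpi_2,\mu-\varpi_2}|+|{}^{2}\mathcal T^{C}_{\lambda,\mu}|.$$ Moreover, if $\min\{m_2,n_2\}>0$ then $$|{}^{2}\mathcal T^{C}_{\lambda,\mu}|=|{}^{2}\mathcal T^{C}_{\lambda-\varpi_2,\mu-\varpi_2}|+\min\{2(m_1+m_2),2(n_1+n_2),m_1+n_1\}+1,$$ and if $\min\{m_2,n_2\}=0$ and $\min\{m_1,n_1\}>0$ then $$|{}^{2}\mathcal T^{C}_{\lambda,\mu}|=|{}^{2}\mathcal T^{C}_{\lambda-\varpi_1,\mu-\varpi_1}|+\min\{n_1,m_2\}+\min\{m_1,n_2\}+1.$$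
   Context: For integral weights $\lambda,\mu$ of type $C_2$ (fundamental weights $\varpi_1,\varpi_2$, $\alpha_1$ short) write $m_i=\lambda(h_i)$, $n_i=\mu(h_i)$ (arbitrary integers; the sets below are defined by the same inequalities for all integer values, e.g. for $\lambda-\varpi_2$ replace $m_2$ by $m_2-1$). $\mathcal T^{C}_{\lambda,\mu}=\{(a,b,c,d)\in\mathbb Z_+^4: a\le m_1,\ c\le m_2,\ d\le n_2,\ b\le n_1,\ c+b-a\le m_2,\ d+b-a\le m_2,\ a+2(c-d)\le n_1,\ b+2(c-d)\le n_1\}$. ${}^{1}\mathcal T^{C}_{\lambda,\mu}$ is the (disjoint) union of $\{(0,b,c,d)\in\mathbb Z_+^4: c+b\le m_2,\ d\le n_2,\ b\le n_1,\ d+b\le m_2,\ b+2(c-d)\le n_1\}$ and $\{(a,0,c,d)\in\mathbb Z_+^4: 1\le a\le m_1,\ c\le m_2,\ d\le n_2,\ d-a\le m_2,\ a+2(c-d)\le n_1\}$. ${}^{2}\mathcal T^{C}_{\lambda,\mu}$ is the disjoint union of the four sets $\{(0,b,0,d): d\le n_2,\ b\le n_1,\ d+b\le m_2\}$, $\{(a,0,0,d): 1\le a\le m_1,\ d\le n_2,\ d-a\le m_2,\ a-2d\le n_1\}$, $\{(0,b,c,0): c\ge1,\ c+b\le m_2,\ b+2c\le n_1\}$, $\{(a,0,c,0): 1\le a\le m_1,\ 1\le c\le m_2,\ a+2c\le n_1\}$, all with entries in $\mathbb Z_+$. *)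

theory Defs
  imports Main
begin

text \<open>Weights of type C2 are encoded by their coordinates m1 = lambda(h1), m2 = lambda(h2),
  n1 = mu(h1), n2 = mu(h2), arbitrary integers. Tuples (a,b,c,d) are integer 4-tuples with
  nonnegative entries.\<close>

definition TC :: "int \<Rightarrow> int \<Rightarrow> int \<Rightarrow> int \<Rightarrow> (int \<times> int \<times> int \<times> int) set" where
  "TC m1 m2 n1 n2 = {(a,b,c,d). 0 \<le> a \<and> 0 \<le> b \<and> 0 \<le> c \<and> 0 \<le> d \<and>
     a \<le> m1 \<and> c \<le> m2 \<and> d \<le> n2 \<and> b \<le> n1 \<and> c + b - a \<le> m2 \<and> d + b - a \<le> m2 \<and>
     a + 2*(c - d) \<le> n1 \<and> b + 2*(c - d) \<le> n1}"

definition TC1 :: "int \<Rightarrow> int \<Rightarrow> int \<Rightarrow> int \<Rightarrow> (int \<times> int \<times> int \<times> int) set" where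
  "TC1 m1 m2 n1 n2 =
     {(a,b,c,d). a = 0 \<and> 0 \<le> b \<and> 0 \<le> c \<and> 0 \<le> d \<and>
        c + b \<le> m2 \<and> d \<le> n2 \<and> b \<le> n1 \<and> d + b \<le> m2 \<and> b + 2*(c - d) \<le> n1}
   \<union> {(a,b,c,d). b = 0 \<and> 0 \<le> c \<and> 0 \<le> d \<and>
        1 \<le> a \<and> a \<le> m1 \<and> c \<le> m2 \<and> d \<le> n2 \<and> d - a \<le> m2 \<and> a + 2*(c - d) \<le> n1}"

definition TC2 :: "int \<Rightarrow> int \<Rightarrow> int \<Rightarrow> int \<Rightarrow> (int \<times> int \<times> int \<times> int) set" where
  "TC2 m1 m2 n1 n2 =
     {(a,b,c,d). a = 0 \<and> c = 0 \<and> 0 \<le> b \<and> 0 \<le> d \<and> d \<le> n2 \<and> b \<le> n1 \<and> d + b \<le> m2}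
   \<union> {(a,b,c,d). b = 0 \<and> c = 0 \<and> 0 \<le> d \<and>
        1 \<le> a \<and> a \<le> m1 \<and> d \<le> n2 \<and> d - a \<le> m2 \<and> a - 2*d \<le> n1}
   \<union> {(a,b,c,d). a = 0 \<and> d = 0 \<and> 0 \<le> b \<and> 1 \<le> c \<and> c + b \<le> m2 \<and> b + 2*c \<le> n1}
   \<union> {(a,b,c,d). b = 0 \<and> d = 0 \<and> 1 \<le> a \<and> a \<le> m1 \<and> 1 \<le> c \<and> c \<le> m2 \<and> a + 2*c \<le> n1}"

end

theory Submission
  imports Defs
begin

text \<open>
  Translating by \<open>(1,1,0,0)\<close> identifies \<open>TC (m1-1) m2 (n1-1) n2\<close> with the tuples of
  \<open>TC m1 m2 n1 n2\<close> having \<open>a, b \<ge> 1\<close>. Among the remaining tuples (\<open>a = 0\<close> or \<open>b = 0\<close>),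
  translating by \<open>(0,0,1,1)\<close> identifies \<open>TC1 m1 (m2-1) n1 (n2-1)\<close> with those having
  \<open>c, d \<ge> 1\<close>, and what is left is exactly \<open>TC2 m1 m2 n1 n2\<close>.

  \<open>TC2\<close> is a disjoint union of four polygons of lattice points in the plane, one for each
  pair of coordinates allowed to be nonzero. Lowering \<open>m2, n2\<close> (or \<open>m1, n1\<close>) by one turns
  each polygon into (a translate of) a sub-polygon; the difference consists of one or two
  lattice segments, and a case analysis shows that their lengths add up to the stated minima.
\<close>

lemma card_eq_card_vimage_plus_card_Diff:
  assumes "finite X" "g -` Y \<subseteq> X" "X - g -` Y = R"
    and "\<And>x. f (g x) = x" "\<And>y. g (f y) = y"
  shows "card X = card Y + card R"
proof -
  have "inj g" by (metis assms(4) injI)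
  moreover have "Y \<subseteq> range g" by (metis assms(5) rangeI subsetI)
  ultimately have "card (g -` Y) = card Y" by (rule card_vimage_inj)
  moreover have "card X = card (g -` Y) + card (X - g -` Y)"
    using assms(1,2) by (metis card_Diff_subset card_mono finite_subset le_add_diff_inverse)
  ultimately show ?thesis using assms(3) by simp
qed

lemma finite_TC: "finite (TC m1 m2 n1 n2)"
  by (rule finite_subset[of _ "{0..m1} \<times> {0..n1} \<times> {0..m2} \<times> {0..n2}"]) (auto simp: TC_def)

lemma TC_Diff_shift_ab:
  "TC m1 m2 n1 n2 - (\<lambda>(a,b,c,d). (a-1,b-1,c,d)) -` TC (m1-1) m2 (n1-1) n2
     = TC m1 m2 n1 n2 \<inter> {(a,b,c,d). a = 0 \<or> b = 0}"
  by (auto simp: TC_def)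

lemma TC_boundary_Diff_shift_cd:
  assumes "0 \<le> m1" "0 \<le> m2" "0 \<le> n1" "0 \<le> n2"
  shows "TC m1 m2 n1 n2 \<inter> {(a,b,c,d). a = 0 \<or> b = 0} - (\<lambda>(a,b,c,d). (a,b,c-1,d-1)) -` TC1 m1 (m2-1) n1 (n2-1)
     = TC2 m1 m2 n1 n2" (is "?B - ?S = _")
proof (intro equalityI subsetI)
  fix x assume x: "x \<in> ?B - ?S"
  obtain a b c d where x_eq: "x = (a,b,c,d)" by (cases x)
  have TC: "(a,b,c,d) \<in> TC m1 m2 n1 n2" and ab: "a = 0 \<or> b = 0"
    using x by (auto simp: x_eq)
  have "c = 0 \<or> d = 0"
  proof (rule ccontr)
    assume "\<not> (c = 0 \<or> d = 0)"
    then have "(a,b,c-1,d-1) \<in> TC1 m1 (m2-1) n1 (n2-1)"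
      using TC ab by (auto simp: TC_def TC1_def)
    then show False using x by (simp add: x_eq)
  qed
  then show "x \<in> TC2 m1 m2 n1 n2"
    using TC ab by (auto simp: x_eq TC_def TC2_def)
next
  fix x assume "x \<in> TC2 m1 m2 n1 n2"
  then show "x \<in> ?B - ?S"
    using assms by (auto simp: TC_def TC1_def TC2_def)
qed

lemma card_TC_decomposition:
  assumes "0 \<le> m1" "0 \<le> m2" "0 \<le> n1" "0 \<le> n2"
  shows "card (TC m1 m2 n1 n2) =
    card (TC (m1-1) m2 (n1-1) n2) + card (TC1 m1 (m2-1) n1 (n2-1)) + card (TC2 m1 m2 n1 n2)"
proof -
  let ?B = "TC m1 m2 n1 n2 \<inter> {(a,b,c,d). a = 0 \<or> b = 0}"
  have "card (TC m1 m2 n1 n2) = card (TC (m1-1) m2 (n1-1) n2) + card ?B"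
    by (rule card_eq_card_vimage_plus_card_Diff[OF finite_TC _ TC_Diff_shift_ab,
          where f = "\<lambda>(a,b,c,d). (a+1,b+1,c,d)"]) (auto simp: TC_def)
  also have "card ?B = card (TC1 m1 (m2-1) n1 (n2-1)) + card (TC2 m1 m2 n1 n2)"
    by (rule card_eq_card_vimage_plus_card_Diff[OF _ _ TC_boundary_Diff_shift_cd[OF assms],
          where f = "\<lambda>(a,b,c,d). (a,b,c+1,d+1)"])
      (use assms finite_TC in \<open>auto simp: TC_def TC1_def\<close>)
  finally show ?thesis by simp
qed

definition TC2_bd :: "int \<Rightarrow> int \<Rightarrow> int \<Rightarrow> (int \<times> int) set" where
  "TC2_bd m2 n1 n2 = {(b,d). 0 \<le> b \<and> 0 \<le> d \<and> d \<le> n2 \<and> b \<le> n1 \<and> d + b \<le> m2}"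

definition TC2_ad :: "int \<Rightarrow> int \<Rightarrow> int \<Rightarrow> int \<Rightarrow> (int \<times> int) set" where
  "TC2_ad m1 m2 n1 n2 = {(a,d). 1 \<le> a \<and> a \<le> m1 \<and> 0 \<le> d \<and> d \<le> n2 \<and> d - a \<le> m2 \<and> a - 2*d \<le> n1}"

definition TC2_bc :: "int \<Rightarrow> int \<Rightarrow> (int \<times> int) set" where
  "TC2_bc m2 n1 = {(b,c). 0 \<le> b \<and> 1 \<le> c \<and> c + b \<le> m2 \<and> b + 2*c \<le> n1}"

definition TC2_ac :: "int \<Rightarrow> int \<Rightarrow> int \<Rightarrow> (int \<times> int) set" where
  "TC2_ac m1 m2 n1 = {(a,c). 1 \<le> a \<and> a \<le> m1 \<and> 1 \<le> c \<and> c \<le> m2 \<and> a + 2*c \<le> n1}"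

lemma finite_TC2_bd: "finite (TC2_bd m2 n1 n2)"
  by (rule finite_subset[of _ "{0..n1} \<times> {0..n2}"]) (auto simp: TC2_bd_def)

lemma finite_TC2_ad: "finite (TC2_ad m1 m2 n1 n2)"
  by (rule finite_subset[of _ "{1..m1} \<times> {0..n2}"]) (auto simp: TC2_ad_def)

lemma finite_TC2_bc: "finite (TC2_bc m2 n1)"
  by (rule finite_subset[of _ "{0..n1} \<times> {1..m2}"]) (auto simp: TC2_bc_def)

lemma finite_TC2_ac: "finite (TC2_ac m1 m2 n1)"
  by (rule finite_subset[of _ "{1..m1} \<times> {1..m2}"]) (auto simp: TC2_ac_def)

lemma card_TC2_eq_sum_faces:
  "card (TC2 m1 m2 n1 n2) =
    card (TC2_bd m2 n1 n2) + card (TC2_ad m1 m2 n1 n2) + card (TC2_bc m2 n1) + card (TC2_ac m1 m2 n1)"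
proof -
  let ?bd = "\<lambda>(b,d). (0::int,b,0::int,d)" and ?ad = "\<lambda>(a,d). (a,0::int,0::int,d)"
    and ?bc = "\<lambda>(b,c). (0::int,b,c,0::int)" and ?ac = "\<lambda>(a,c). (a,0::int,c,0::int)"
  have TC2_eq: "TC2 m1 m2 n1 n2 = ?bd ` TC2_bd m2 n1 n2 \<union> ?ad ` TC2_ad m1 m2 n1 n2
      \<union> ?bc ` TC2_bc m2 n1 \<union> ?ac ` TC2_ac m1 m2 n1"
    by (auto simp: TC2_def TC2_bd_def TC2_ad_def TC2_bc_def TC2_ac_def image_iff)
  have inj: "inj ?bd" "inj ?ad" "inj ?bc" "inj ?ac"
    by (auto simp: inj_def)
  show ?thesis
    unfolding TC2_eq
    using finite_TC2_bd finite_TC2_ad finite_TC2_bc finite_TC2_ac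
    by (subst card_Un_disjoint, auto simp: TC2_ad_def TC2_bc_def TC2_ac_def
        card_image inj[THEN inj_on_subset])+
qed

lemma card_TC2_bd_varpi2_step:
  assumes "1 \<le> m2" "1 \<le> n2"
  shows "card (TC2_bd m2 n1 n2) = card (TC2_bd (m2-1) n1 (n2-1)) + nat (min n1 m2 + 1)"
proof -
  have "card (TC2_bd m2 n1 n2) = card (TC2_bd (m2-1) n1 (n2-1)) + card ((\<lambda>b. (b,0::int)) ` {0..min n1 m2})"
    by (rule card_eq_card_vimage_plus_card_Diff[OF finite_TC2_bd,
          where g = "\<lambda>(b,d). (b,d-1::int)" and f = "\<lambda>(b,d). (b,d+1)"])
      (use assms in \<open>auto simp: TC2_bd_def\<close>)
  then show ?thesis by (simp add: card_image inj_on_def)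
qed

lemma card_TC2_ad_varpi2_step:
  assumes "0 \<le> n1" "1 \<le> m2" "1 \<le> n2"
  shows "card (TC2_ad m1 m2 n1 n2) = card (TC2_ad m1 (m2-1) n1 (n2-1))
    + nat (min m1 (n1 + 2*n2) - max 1 (n2 - m2) + 1) + nat (min m1 (n2 - m2 - 1))"
proof -
  let ?top = "(\<lambda>a. (a,n2)) ` {max 1 (n2-m2)..min m1 (n1 + 2*n2)}"
    and ?diag = "(\<lambda>a. (a,a+m2)) ` {1..min m1 (n2-m2-1)}"
  have "card (TC2_ad m1 m2 n1 n2) = card (TC2_ad m1 (m2-1) n1 (n2-1)) + card (?top \<union> ?diag)"
    by (rule card_eq_card_vimage_plus_card_Diff[OF finite_TC2_ad, where g = id and f = id])
      (use assms in \<open>auto simp: TC2_ad_def image_iff\<close>)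
  also have "card (?top \<union> ?diag) = card ?top + card ?diag"
    by (rule card_Un_disjoint) auto
  finally show ?thesis by (simp add: card_image inj_on_def)
qed

lemma card_TC2_bc_varpi2_step:
  "card (TC2_bc m2 n1) = card (TC2_bc (m2-1) n1) + nat (min m2 (n1 - m2))"
proof -
  have "card (TC2_bc m2 n1) = card (TC2_bc (m2-1) n1) + card ((\<lambda>c. (m2-c,c)) ` {1..min m2 (n1-m2)})"
    by (rule card_eq_card_vimage_plus_card_Diff[OF finite_TC2_bc, where g = id and f = id])
      (auto simp: TC2_bc_def image_iff)
  then show ?thesis by (simp add: card_image inj_on_def)
qed

lemma card_TC2_ac_varpi2_step:
  assumes "1 \<le> m2"
  shows "card (TC2_ac m1 m2 n1) = card (TC2_ac m1 (m2-1) n1) + nat (min m1 (n1 - 2*m2))"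
proof -
  have "card (TC2_ac m1 m2 n1) = card (TC2_ac m1 (m2-1) n1) + card ((\<lambda>a. (a,m2)) ` {1..min m1 (n1-2*m2)})"
    by (rule card_eq_card_vimage_plus_card_Diff[OF finite_TC2_ac, where g = id and f = id])
      (use assms in \<open>auto simp: TC2_ac_def\<close>)
  then show ?thesis by (simp add: card_image inj_on_def)
qed

lemma le_div2_iff: "(c::int) \<le> n div 2 \<longleftrightarrow> 2 * c \<le> n"
  by linarith

lemma card_TC2_bd_varpi1_step:
  assumes "0 \<le> n1"
  shows "card (TC2_bd m2 n1 n2) = card (TC2_bd m2 (n1-1) n2) + nat (min n2 (m2 - n1) + 1)"
proof -
  have "card (TC2_bd m2 n1 n2) = card (TC2_bd m2 (n1-1) n2) + card ((\<lambda>d. (n1,d)) ` {0..min n2 (m2-n1)})"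
    by (rule card_eq_card_vimage_plus_card_Diff[OF finite_TC2_bd, where g = id and f = id])
      (use assms in \<open>auto simp: TC2_bd_def\<close>)
  then show ?thesis by (simp add: card_image inj_on_def)
qed

lemma card_TC2_ad_varpi1_step:
  assumes "1 \<le> m1" "0 \<le> m2" "1 \<le> n1"
  shows "card (TC2_ad m1 m2 n1 n2) = card (TC2_ad (m1-1) m2 (n1-1) n2)
    + nat (min n2 (m2 + 1) + 1) + nat (min m1 (n2 - m2) - 1)"
proof -
  let ?first = "(\<lambda>d. (1::int,d)) ` {0..min n2 (m2+1)}"
    and ?diag = "(\<lambda>a. (a,a+m2)) ` {2..min m1 (n2-m2)}"
  have "card (TC2_ad m1 m2 n1 n2) = card (TC2_ad (m1-1) m2 (n1-1) n2) + card (?first \<union> ?diag)"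
    by (rule card_eq_card_vimage_plus_card_Diff[OF finite_TC2_ad,
          where g = "\<lambda>(a,d). (a-1::int,d)" and f = "\<lambda>(a,d). (a+1,d)"])
      (use assms in \<open>auto simp: TC2_ad_def image_iff\<close>)
  also have "card (?first \<union> ?diag) = card ?first + card ?diag"
    by (rule card_Un_disjoint) auto
  finally show ?thesis by (simp add: card_image inj_on_def)
qed

lemma card_TC2_bc_varpi1_step:
  "card (TC2_bc m2 n1) = card (TC2_bc m2 (n1-1)) + nat (n1 div 2 - max 1 (n1 - m2) + 1)"
proof -
  have "card (TC2_bc m2 n1) = card (TC2_bc m2 (n1-1))
      + card ((\<lambda>c. (n1-2*c,c)) ` {max 1 (n1-m2)..n1 div 2})"
    by (rule card_eq_card_vimage_plus_card_Diff[OF finite_TC2_bc, where g = id and f = id])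
      (auto simp: TC2_bc_def image_iff le_div2_iff)
  then show ?thesis by (simp add: card_image inj_on_def)
qed

lemma card_TC2_ac_varpi1_step:
  assumes "1 \<le> m1"
  shows "card (TC2_ac m1 m2 n1) = card (TC2_ac (m1-1) m2 (n1-1)) + nat (min m2 ((n1-1) div 2))"
proof -
  have "card (TC2_ac m1 m2 n1) = card (TC2_ac (m1-1) m2 (n1-1))
      + card ((\<lambda>c. (1::int,c)) ` {1..min m2 ((n1-1) div 2)})"
    by (rule card_eq_card_vimage_plus_card_Diff[OF finite_TC2_ac,
          where g = "\<lambda>(a,c). (a-1::int,c)" and f = "\<lambda>(a,c). (a+1,c)"])
      (use assms in \<open>auto simp: TC2_ac_def image_iff le_div2_iff\<close>)
  then show ?thesis by (simp add: card_image inj_on_def)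
qed

lemma sum_strip_lengths_varpi2:
  fixes m1 m2 n1 n2 :: int
  assumes "0 \<le> m1" "0 \<le> n1" "1 \<le> m2" "1 \<le> n2"
  shows "int (nat (min n1 m2 + 1) + nat (min m1 (n1 + 2*n2) - max 1 (n2 - m2) + 1)
      + nat (min m1 (n2 - m2 - 1)) + nat (min m2 (n1 - m2)) + nat (min m1 (n1 - 2*m2)))
      = min (min (2*(m1 + m2)) (2*(n1 + n2))) (m1 + n1) + 1"
  using assms
  by (cases "n1 \<le> m2"; cases "m1 \<le> n1 + 2*n2"; cases "m2 < n2"; cases "m1 < n2 - m2";
      cases "m2 \<le> n1 - m2"; cases "m1 \<le> n1 - 2*m2"; simp add: min_def max_def)

lemma sum_strip_lengths_varpi1:
  fixes m1 m2 n1 n2 :: int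
  assumes "1 \<le> m1" "1 \<le> n1" "0 \<le> m2" "0 \<le> n2" "m2 = 0 \<or> n2 = 0"
  shows "int (nat (min n2 (m2 - n1) + 1) + nat (min n2 (m2 + 1) + 1) + nat (min m1 (n2 - m2) - 1)
      + nat (n1 div 2 - max 1 (n1 - m2) + 1) + nat (min m2 ((n1 - 1) div 2)))
      = min n1 m2 + min m1 n2 + 1"
  using assms(5)
proof
  assume "m2 = 0"
  then show ?thesis using assms(1-4)
    by (cases "n2 \<le> 1"; cases "m1 \<le> n2"; simp add: min_def max_def; linarith)
next
  assume "n2 = 0"
  then show ?thesis using assms(1-4)
    by (cases "n1 \<le> m2"; cases "2 * m2 \<le> n1 - 1"; simp add: min_def max_def; linarith)
qed

lemma card_TC2_varpi2_step:
  assumes "0 \<le> m1" "0 \<le> n1" "1 \<le> m2" "1 \<le> n2"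
  shows "int (card (TC2 m1 m2 n1 n2)) = int (card (TC2 m1 (m2-1) n1 (n2-1)))
    + min (min (2*(m1 + m2)) (2*(n1 + n2))) (m1 + n1) + 1"
proof -
  have "card (TC2 m1 m2 n1 n2) = card (TC2 m1 (m2-1) n1 (n2-1))
      + (nat (min n1 m2 + 1) + nat (min m1 (n1 + 2*n2) - max 1 (n2 - m2) + 1)
        + nat (min m1 (n2 - m2 - 1)) + nat (min m2 (n1 - m2)) + nat (min m1 (n1 - 2*m2)))"
    unfolding card_TC2_eq_sum_faces card_TC2_bd_varpi2_step[OF assms(3,4)]
      card_TC2_ad_varpi2_step[OF assms(2-4)] card_TC2_bc_varpi2_step[of m2 n1]
      card_TC2_ac_varpi2_step[OF assms(3)]
    by linarith
  then show ?thesis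
    using sum_strip_lengths_varpi2[OF assms] by linarith
qed

lemma card_TC2_varpi1_step:
  assumes "1 \<le> m1" "1 \<le> n1" "0 \<le> m2" "0 \<le> n2" "m2 = 0 \<or> n2 = 0"
  shows "int (card (TC2 m1 m2 n1 n2)) = int (card (TC2 (m1-1) m2 (n1-1) n2))
    + min n1 m2 + min m1 n2 + 1"
proof -
  have "0 \<le> n1" using assms(2) by simp
  have "card (TC2 m1 m2 n1 n2) = card (TC2 (m1-1) m2 (n1-1) n2)
      + (nat (min n2 (m2 - n1) + 1) + nat (min n2 (m2 + 1) + 1) + nat (min m1 (n2 - m2) - 1)
        + nat (n1 div 2 - max 1 (n1 - m2) + 1) + nat (min m2 ((n1 - 1) div 2)))"
    unfolding card_TC2_eq_sum_faces card_TC2_bd_varpi1_step[OF \<open>0 \<le> n1\<close>]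
      card_TC2_ad_varpi1_step[OF assms(1,3,2)] card_TC2_bc_varpi1_step[of m2 n1]
      card_TC2_ac_varpi1_step[OF assms(1)]
    by linarith
  then show ?thesis
    using sum_strip_lengths_varpi1[OF assms] by linarith
qed

theorem lemma5p2:
  fixes m1 m2 n1 n2 :: int
  assumes "0 \<le> m1" "0 \<le> m2" "0 \<le> n1" "0 \<le> n2"
  shows "card (TC m1 m2 n1 n2) =
           card (TC (m1 - 1) m2 (n1 - 1) n2) + card (TC1 m1 (m2 - 1) n1 (n2 - 1))
           + card (TC2 m1 m2 n1 n2)
       \<and> (min m2 n2 > 0 \<longrightarrow>
           int (card (TC2 m1 m2 n1 n2)) = int (card (TC2 m1 (m2 - 1) n1 (n2 - 1)))
             + min (min (2*(m1 + m2)) (2*(n1 + n2))) (m1 + n1) + 1)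
       \<and> (min m2 n2 = 0 \<longrightarrow> min m1 n1 > 0 \<longrightarrow>
           int (card (TC2 m1 m2 n1 n2)) = int (card (TC2 (m1 - 1) m2 (n1 - 1) n2))
             + min n1 m2 + min m1 n2 + 1)"
proof (intro conjI impI)
  show "card (TC m1 m2 n1 n2) = card (TC (m1 - 1) m2 (n1 - 1) n2)
      + card (TC1 m1 (m2 - 1) n1 (n2 - 1)) + card (TC2 m1 m2 n1 n2)"
    using card_TC_decomposition[OF assms] .
next
  assume "min m2 n2 > 0"
  then show "int (card (TC2 m1 m2 n1 n2)) = int (card (TC2 m1 (m2 - 1) n1 (n2 - 1)))
      + min (min (2*(m1 + m2)) (2*(n1 + n2))) (m1 + n1) + 1"
    using assms by (intro card_TC2_varpi2_step) simp_all
next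
  assume "min m2 n2 = 0" and "min m1 n1 > 0"
  then show "int (card (TC2 m1 m2 n1 n2)) = int (card (TC2 (m1 - 1) m2 (n1 - 1) n2))
      + min n1 m2 + min m1 n2 + 1"
    using assms by (intro card_TC2_varpi1_step) (simp_all add: min_def split: if_splits)
qed

end
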